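(* Let $G\leq\operatorname{Homeo}(\mathfrak{C})$ be a vigorous group generated by its elements of small support. Suppose $B,C,D\in K_{\mathfrak{C}}$ are pairwise disjoint and $B\cup C\cup D=\mathfrak{C}$. Then $G=\langle \operatorname{pstab}_G(C)\cup\operatorname{pstab}_G(D)\rangle$.
   Context: $\mathfrak{C}$ denotes a Cantor space (a space homeomorphic to $\{0,1\}^\omega$). Groups of homeomorphisms act on the right. $K_{\mathfrak{C}}$ denotes the set of non-empty proper clopen subsets of $\mathfrak{C}$. For $\gamma\in\operatorname{Homeo}(\mathfrak{C})$, $\operatorname{supp}(\gamma)=\{p\in\mathfrak{C}: p\gamma\neq p\}$. For $G\le\operatorname{Homeo}(\mathfrak{C})$ and $A\subseteq\mathfrak{C}$, $\operatorname{pstab}_G(A)=\{g\in G: pg=p \text{ for all } p\in A\}$. A subset $S\subseteq \operatorname{Homeo}(\mathfrak{C})$ is vigorous if for all clopen $A,B,C\subseteq\mathfrak{C}$ with $B,C$ non-empty proper subsets of $A$ there is $\gamma\in S$ with $\operatorname{supp}(\gamma)\subseteq A$ and $B\gamma\subseteq C$. $G$ is generated by its elements of small support if $G$ is generated by $\{\gamma\in G: \operatorname{supp}(\gamma)\subseteq A \text{ for some } A\in K_{\mathfrak{C}}\}$. *)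

theory Defs
  imports "HOL-Analysis.Analysis"
begin

definition cantor_top :: "(nat \<Rightarrow> bool) topology" where
  "cantor_top = product_topology (\<lambda>_. discrete_topology UNIV) UNIV"

text \<open>Homeomorphisms of a space whose carrier is the whole type.\<close>
definition Homeo :: "'a topology \<Rightarrow> ('a \<Rightarrow> 'a) set" where
  "Homeo X = {f. homeomorphic_map X X f}"

definition clopen_in :: "'a topology \<Rightarrow> 'a set \<Rightarrow> bool" where
  "clopen_in X A \<longleftrightarrow> openin X A \<and> closedin X A"

definition Kset :: "'a topology \<Rightarrow> 'a set set" where
  "Kset X = {A. clopen_in X A \<and> A \<noteq> {} \<and> A \<noteq> topspace X}"

definition supp :: "('a \<Rightarrow> 'a) \<Rightarrow> 'a set" where
  "supp g = {p. g p \<noteq> p}"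

definition pstab :: "('a \<Rightarrow> 'a) set \<Rightarrow> 'a set \<Rightarrow> ('a \<Rightarrow> 'a) set" where
  "pstab G A = {g \<in> G. \<forall>p\<in>A. g p = p}"

definition vigorous :: "'a topology \<Rightarrow> ('a \<Rightarrow> 'a) set \<Rightarrow> bool" where
  "vigorous X S \<longleftrightarrow>
     (\<forall>A B C. clopen_in X A \<and> clopen_in X B \<and> clopen_in X C \<and>
        B \<noteq> {} \<and> C \<noteq> {} \<and> B \<subset> A \<and> C \<subset> A \<longrightarrow>
        (\<exists>g\<in>S. supp g \<subseteq> A \<and> g ` B \<subseteq> C))"

definition homeo_subgroup :: "'a topology \<Rightarrow> ('a \<Rightarrow> 'a) set \<Rightarrow> bool" where
  "homeo_subgroup X G \<longleftrightarrow> G \<subseteq> Homeo X \<and> id \<in> G \<and>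
     (\<forall>f\<in>G. \<forall>g\<in>G. f \<circ> g \<in> G) \<and> (\<forall>f\<in>G. inv f \<in> G)"

inductive_set gen_group :: "('a \<Rightarrow> 'a) set \<Rightarrow> ('a \<Rightarrow> 'a) set" for S where
  gen_id: "id \<in> gen_group S"
| gen_base: "f \<in> S \<Longrightarrow> f \<in> gen_group S"
| gen_comp: "f \<in> gen_group S \<Longrightarrow> g \<in> gen_group S \<Longrightarrow> f \<circ> g \<in> gen_group S"
| gen_inv: "f \<in> gen_group S \<Longrightarrow> inv f \<in> gen_group S"

definition small_support_gen :: "'a topology \<Rightarrow> ('a \<Rightarrow> 'a) set \<Rightarrow> bool" where
  "small_support_gen X G \<longleftrightarrow>
     G = gen_group {g \<in> G. \<exists>A\<in>Kset X. supp g \<subseteq> A}"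

end

theory Submission
  imports Defs
begin

text \<open>Let \<open>H\<close> be the group generated by the point stabilisers of \<open>C\<close> and \<open>D\<close>. Since \<open>G\<close> is
  generated by elements of small support, it suffices to show that every \<open>g \<in> G\<close> supported in
  some \<open>A \<in> K\<close> lies in \<open>H\<close>. Vigour provides \<open>h \<in> H\<close> with \<open>h C \<subseteq> -A\<close>: an element supported in
  \<open>B \<union> C\<close> (which fixes \<open>D\<close>) moving \<open>C\<close> into \<open>-A\<close> when \<open>-A\<close> meets \<open>B \<union> C\<close>, and otherwise one
  moving \<open>C\<close> into \<open>B\<close> followed by one supported in \<open>B \<union> D\<close> (which fixes \<open>C\<close>) moving \<open>B\<close> into
  \<open>-A \<subseteq> D\<close>. Then \<open>h\<^sup>-\<^sup>1 g h\<close> fixes \<open>C\<close> pointwise, so \<open>g = h (h\<^sup>-\<^sup>1 g h) h\<^sup>-\<^sup>1 \<in> H\<close>.\<close>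

lemma clopen_in_Compl:
  assumes "topspace X = UNIV" "clopen_in X A"
  shows "clopen_in X (- A)"
proof -
  have "- A = topspace X - A" using assms(1) by auto
  then show ?thesis using assms(2) unfolding clopen_in_def
    by (metis closedin_diff openin_diff openin_topspace closedin_topspace)
qed

lemma clopen_in_Un: "clopen_in X A \<Longrightarrow> clopen_in X B \<Longrightarrow> clopen_in X (A \<union> B)"
  unfolding clopen_in_def by auto

lemma clopen_in_Int: "clopen_in X A \<Longrightarrow> clopen_in X B \<Longrightarrow> clopen_in X (A \<inter> B)"
  unfolding clopen_in_def by auto

lemma homeo_subgroup_bij:
  assumes "topspace X = UNIV" "homeo_subgroup X G" "f \<in> G"
  shows "bij f"
proof -
  have "homeomorphic_map X X f"
    using assms(2,3) unfolding homeo_subgroup_def Homeo_def by auto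
  then show ?thesis
    using assms(1) homeomorphic_imp_surjective_map homeomorphic_imp_injective_map
    by (metis bij_betw_def)
qed

lemma gen_group_least:
  assumes "S \<subseteq> T" "id \<in> T"
    and "\<And>f g. f \<in> T \<Longrightarrow> g \<in> T \<Longrightarrow> f \<circ> g \<in> T" "\<And>f. f \<in> T \<Longrightarrow> inv f \<in> T"
  shows "gen_group S \<subseteq> T"
proof
  fix f assume "f \<in> gen_group S"
  then show "f \<in> T"
    by induction (use assms in blast)+
qed

lemma gen_group_subset_homeo_subgroup:
  "homeo_subgroup X G \<Longrightarrow> S \<subseteq> G \<Longrightarrow> gen_group S \<subseteq> G"
  by (rule gen_group_least) (auto simp: homeo_subgroup_def)

lemma gen_group_subset_gen_group: "S \<subseteq> gen_group T \<Longrightarrow> gen_group S \<subseteq> gen_group T"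
  by (rule gen_group_least) (auto intro: gen_group.intros)

lemma pstab_if_supp_disjoint: "h \<in> G \<Longrightarrow> supp h \<inter> A = {} \<Longrightarrow> h \<in> pstab G A"
  unfolding pstab_def supp_def by auto

lemma conjugate_fixes_outside_supp:
  assumes "bij h" "h ` C \<inter> supp g = {}" "p \<in> C"
  shows "(inv h \<circ> g \<circ> h) p = p"
proof -
  have "g (h p) = h p" using assms(2,3) unfolding supp_def by auto
  then show ?thesis using assms(1) by (simp add: bij_is_inj)
qed

lemma vigorous_moves_into:
  assumes "vigorous X G" "clopen_in X U" "clopen_in X C" "clopen_in X E"
    and "C \<noteq> {}" "C \<subset> U" "E \<inter> U \<noteq> {}"
  shows "\<exists>h\<in>G. supp h \<subseteq> U \<and> h ` C \<subseteq> E"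
proof (cases "U \<subseteq> E")
  case True
  \<comment> \<open>Vigour with target \<open>C\<close> itself already yields an element supported in \<open>U \<subseteq> E\<close>.\<close>
  obtain h where "h \<in> G" "supp h \<subseteq> U" "h ` C \<subseteq> C"
    using assms(1-3,5,6) unfolding vigorous_def by blast
  then show ?thesis using True assms(6) by blast
next
  case False
  then have "E \<inter> U \<subset> U" by auto
  then obtain h where "h \<in> G" "supp h \<subseteq> U" "h ` C \<subseteq> E \<inter> U"
    using assms unfolding vigorous_def by (meson clopen_in_Int)
  then show ?thesis by blast
qed

locale clopen_partition =
  fixes X :: "'a topology" and G :: "('a \<Rightarrow> 'a) set" and B C D :: "'a set"
  assumes vigorous: "vigorous X G"
    and clopen: "clopen_in X B" "clopen_in X C" "clopen_in X D"
    and nonempty: "B \<noteq> {}" "C \<noteq> {}" "D \<noteq> {}"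
    and disjoint: "B \<inter> C = {}" "B \<inter> D = {}" "C \<inter> D = {}"
    and cover: "B \<union> C \<union> D = UNIV"
begin

abbreviation H :: "('a \<Rightarrow> 'a) set" where
  "H \<equiv> gen_group (pstab G C \<union> pstab G D)"

lemma supp_BC_in_H: "h \<in> G \<Longrightarrow> supp h \<subseteq> B \<union> C \<Longrightarrow> h \<in> H"
  using disjoint pstab_if_supp_disjoint[of h G D] by (auto intro: gen_base)

lemma supp_BD_in_H: "h \<in> G \<Longrightarrow> supp h \<subseteq> B \<union> D \<Longrightarrow> h \<in> H"
  using disjoint pstab_if_supp_disjoint[of h G C] by (auto intro: gen_base)

lemma H_moves_C_into:
  assumes "clopen_in X E" "E \<noteq> {}"
  shows "\<exists>h\<in>H. h ` C \<subseteq> E"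
proof (cases "E \<inter> (B \<union> C) = {}")
  case False
  have "C \<subset> B \<union> C" using nonempty disjoint by auto
  then obtain h where "h \<in> G" "supp h \<subseteq> B \<union> C" "h ` C \<subseteq> E"
    using vigorous_moves_into[OF vigorous clopen_in_Un[OF clopen(1,2)] clopen(2) assms(1)]
      nonempty False by blast
  then show ?thesis using supp_BC_in_H by blast
next
  case True
  have "C \<subset> B \<union> C" "B \<inter> (B \<union> C) \<noteq> {}" using nonempty disjoint by auto
  then obtain h1 where h1: "h1 \<in> G" "supp h1 \<subseteq> B \<union> C" "h1 ` C \<subseteq> B"
    using vigorous_moves_into[OF vigorous clopen_in_Un[OF clopen(1,2)] clopen(2,1)]
      nonempty by blast
  have "B \<subset> B \<union> D" "E \<inter> (B \<union> D) \<noteq> {}" using nonempty disjoint cover True assms(2) by auto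
  then obtain h2 where h2: "h2 \<in> G" "supp h2 \<subseteq> B \<union> D" "h2 ` B \<subseteq> E"
    using vigorous_moves_into[OF vigorous clopen_in_Un[OF clopen(1,3)] clopen(1) assms(1)]
      nonempty by blast
  have "h2 \<circ> h1 \<in> H" using h1 h2 supp_BC_in_H supp_BD_in_H by (blast intro: gen_comp)
  moreover have "(h2 \<circ> h1) ` C \<subseteq> E" using h1(3) h2(3) by auto
  ultimately show ?thesis by blast
qed

lemma small_support_in_H:
  assumes top: "topspace X = UNIV" and grp: "homeo_subgroup X G"
    and g: "g \<in> G" "A \<in> Kset X" "supp g \<subseteq> A"
  shows "g \<in> H"
proof -
  have "clopen_in X (- A)" "- A \<noteq> {}"
    using g(2) top clopen_in_Compl unfolding Kset_def by auto
  then obtain h where h: "h \<in> H" "h ` C \<subseteq> - A" using H_moves_C_into by blast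
  have "H \<subseteq> G" using gen_group_subset_homeo_subgroup[OF grp] unfolding pstab_def by auto
  with h(1) have hG: "h \<in> G" by blast
  have bij: "bij h" using homeo_subgroup_bij[OF top grp hG] .
  define k where "k = inv h \<circ> g \<circ> h"
  have "k \<in> G" using grp hG g(1) unfolding k_def homeo_subgroup_def by auto
  moreover have "\<forall>p\<in>C. k p = p"
    using conjugate_fixes_outside_supp[OF bij] h(2) g(3) unfolding k_def by blast
  ultimately have "k \<in> H" unfolding pstab_def by (blast intro: gen_base)
  then have "h \<circ> k \<circ> inv h \<in> H" using h(1) by (blast intro: gen_comp gen_inv)
  moreover have "h \<circ> k \<circ> inv h = g"
    unfolding k_def using bij by (simp add: fun_eq_iff bij_is_surj surj_f_inv_f)
  ultimately show ?thesis by simp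
qed

end

theorem lemma2p8:
  fixes X :: "'a topology" and G :: "('a \<Rightarrow> 'a) set" and B C D :: "'a set"
  assumes "topspace X = UNIV"
    and "X homeomorphic_space cantor_top"
    and "homeo_subgroup X G"
    and "vigorous X G"
    and "small_support_gen X G"
    and "B \<in> Kset X" and "C \<in> Kset X" and "D \<in> Kset X"
    and "B \<inter> C = {}" and "B \<inter> D = {}" and "C \<inter> D = {}"
    and "B \<union> C \<union> D = UNIV"
  shows "G = gen_group (pstab G C \<union> pstab G D)"
proof -
  interpret clopen_partition X G B C D
    using assms(4,6-12) by unfold_locales (auto simp: Kset_def)
  have "H \<subseteq> G"
    using gen_group_subset_homeo_subgroup[OF assms(3)] unfolding pstab_def by auto
  moreover have "gen_group {g \<in> G. \<exists>A\<in>Kset X. supp g \<subseteq> A} \<subseteq> H"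
    using small_support_in_H[OF assms(1,3)] by (intro gen_group_subset_gen_group) blast
  ultimately show ?thesis
    using assms(5) unfolding small_support_gen_def by auto
qed

end
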